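(* Let $A\cong \mathbb{Z}_2^r\times N$, where $r\ge 0$ is an integer and $N$ is a non-cyclic abelian group of odd order, let $n=|A|$, and let $m$ be the number of elements of $A$ of order at most $2$. Let $\Gamma=\Gamma(A,S)$ be a Cayley graph on $A$ (for some inverse-closed $S\subseteq A\setminus\{0\}$) such that $\mathrm{Aut}(\Gamma)=A\rtimes\langle i\rangle$. If $\chi(\Gamma)<\frac{n}{m+2\log(2n)}$, then $\chi_D(\Gamma)\le\chi(\Gamma)+1$.
   Context: The Cayley graph $\Gamma(A,S)$ has vertex set $A$, with $x,y$ adjacent iff $y-x\in S$. $i:A\to A$ is $i(x)=-x$, and $A\rtimes\langle i\rangle$ denotes the group of permutations of $A$ generated by the translations $x\mapsto x+g$ ($g\in A$) and $i$. $\chi$ is the chromatic number; the distinguishing chromatic number $\chi_D(G)$ is the least $r$ such that $V(G)$ can be partitioned into independent sets $V_1,\dots,V_r$ such that for every non-identity automorphism $\pi$ of $G$ there is some $j$ with $\pi(V_j)\ne V_j$. $\log$ denotes $\log_2$. *)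

theory Defs
  imports Complex_Main
begin

definition nat_mult :: "nat \<Rightarrow> 'a::ab_group_add \<Rightarrow> 'a" where
  "nat_mult k g = ((+) g ^^ k) 0"

definition add_subgroup :: "'a::ab_group_add set \<Rightarrow> bool" where
  "add_subgroup H \<longleftrightarrow> 0 \<in> H \<and> (\<forall>x\<in>H. \<forall>y\<in>H. x + y \<in> H) \<and> (\<forall>x\<in>H. - x \<in> H)"

definition cyclic_subgroup :: "'a::ab_group_add set \<Rightarrow> bool" where
  "cyclic_subgroup H \<longleftrightarrow> (\<exists>g\<in>H. H = {nat_mult k g | k. True})"

text \<open>A is (internally) isomorphic to Z_2^r x N with N a non-cyclic group of odd order:
  A is the internal direct sum of an elementary abelian 2-subgroup E and a
  non-cyclic subgroup N of odd order.\<close>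
definition Z2r_times_noncyclic_odd :: "'a::{ab_group_add,finite} itself \<Rightarrow> bool" where
  "Z2r_times_noncyclic_odd _ \<longleftrightarrow>
     (\<exists>E N :: 'a set. add_subgroup E \<and> add_subgroup N \<and> (\<forall>x\<in>E. x + x = 0)
        \<and> odd (card N) \<and> \<not> cyclic_subgroup N
        \<and> E \<inter> N = {0} \<and> {e + x | e x. e \<in> E \<and> x \<in> N} = UNIV)"

definition cay_adj :: "'a::ab_group_add set \<Rightarrow> 'a \<Rightarrow> 'a \<Rightarrow> bool" where
  "cay_adj S x y \<longleftrightarrow> y - x \<in> S"

definition cay_aut :: "'a::ab_group_add set \<Rightarrow> ('a \<Rightarrow> 'a) set" where
  "cay_aut S = {\<pi>. bij \<pi> \<and> (\<forall>x y. cay_adj S x y \<longleftrightarrow> cay_adj S (\<pi> x) (\<pi> y))}"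

text \<open>A semidirect product with i, as a permutation group: translations and x \<mapsto> -x + g.\<close>
definition transl_inv_group :: "('a::ab_group_add \<Rightarrow> 'a) set" where
  "transl_inv_group = {(\<lambda>x. x + g) | g. True} \<union> {(\<lambda>x. - x + g) | g. True}"

definition proper_colouring :: "'a::ab_group_add set \<Rightarrow> nat \<Rightarrow> ('a \<Rightarrow> nat) \<Rightarrow> bool" where
  "proper_colouring S k c \<longleftrightarrow> (\<forall>x. c x < k) \<and> (\<forall>x y. cay_adj S x y \<longrightarrow> c x \<noteq> c y)"

definition chromatic_number :: "'a::ab_group_add set \<Rightarrow> nat" where
  "chromatic_number S = (LEAST k. \<exists>c. proper_colouring S k c)"

definition distinguishing_colouring :: "'a::ab_group_add set \<Rightarrow> nat \<Rightarrow> ('a \<Rightarrow> nat) \<Rightarrow> bool" where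
  "distinguishing_colouring S k c \<longleftrightarrow> proper_colouring S k c \<and>
     (\<forall>\<pi>\<in>cay_aut S. \<pi> \<noteq> id \<longrightarrow> (\<exists>j<k. \<pi> ` (c -` {j}) \<noteq> c -` {j}))"

definition dist_chromatic_number :: "'a::ab_group_add set \<Rightarrow> nat" where
  "dist_chromatic_number S = (LEAST k. \<exists>c. distinguishing_colouring S k c)"

end

theory Submission
  imports Defs "HOL-Combinatorics.Orbits"
begin

(* Let \<Gamma> = Cay(A,S) with Aut(\<Gamma>) = A \<rtimes> <i>, n = |A| and m the number of elements of
   order at most 2. Take a proper colouring with \<chi> = \<chi>(\<Gamma>) colours; some colour class C has
   at least n/\<chi> > m + 2 log (2n) elements. A non-identity automorphism \<pi> fixes at most m
   vertices, so it has at most (|C| + m)/2 orbits inside C and leaves at most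
   2^((|C|+m)/2) subsets of C invariant. Summing over the fewer than 2n automorphisms
   gives fewer than 2^|C| invariant subsets, so some T \<subseteq> C is moved by every
   non-identity automorphism. Recolouring T with a new colour gives a distinguishing
   colouring with \<chi> + 1 colours. *)

lemma orbit_eq_of_mem:
  assumes "permutation f" "t \<in> orbit f s"
  shows "orbit f t = orbit f s"
proof -
  have "s \<in> orbit f t"
    using orbit_swap[OF permutation_self_in_orbit[OF assms(1)] assms(2)] .
  then show ?thesis
    using orbit_trans[OF _ assms(2)] orbit_trans[of _ f s t] by blast
qed

lemma orbit_subset_of_invariant:
  assumes "f ` T \<subseteq> T" "x \<in> T"
  shows "orbit f x \<subseteq> T"
proof
  fix y assume "y \<in> orbit f x"
  then show "y \<in> T"
    by induction (use assms in blast)+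
qed

(* The f-orbits that lie entirely inside C; an f-invariant subset of C is a union of these. *)
definition orbits_within :: "('a \<Rightarrow> 'a) \<Rightarrow> 'a set \<Rightarrow> 'a set set" where
  "orbits_within f C = {orbit f x | x. x \<in> C \<and> orbit f x \<subseteq> C}"

lemma finite_orbits_within:
  assumes "finite C"
  shows "finite (orbits_within f C)"
proof -
  have "orbits_within f C \<subseteq> orbit f ` C"
    unfolding orbits_within_def by blast
  then show ?thesis
    using assms finite_subset by blast
qed

lemma invariant_subset_eq_Union_orbits:
  assumes "permutation f" "T \<subseteq> C" "f ` T \<subseteq> T"
  shows "T = \<Union>{X \<in> orbits_within f C. X \<subseteq> T}"
proof
  show "T \<subseteq> \<Union>{X \<in> orbits_within f C. X \<subseteq> T}"
  proof
    fix x assume "x \<in> T"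
    then have "orbit f x \<in> {X \<in> orbits_within f C. X \<subseteq> T}"
      using orbit_subset_of_invariant[OF assms(3)] assms(2) unfolding orbits_within_def by blast
    then show "x \<in> \<Union>{X \<in> orbits_within f C. X \<subseteq> T}"
      using permutation_self_in_orbit[OF assms(1)] by blast
  qed
qed blast

(* Hence the invariant subsets of C inject into the subsets of orbits_within f C. *)
lemma card_invariant_subsets_le:
  assumes "permutation f" "finite C"
  shows "card {T. T \<subseteq> C \<and> f ` T = T} \<le> 2 ^ card (orbits_within f C)"
proof -
  let ?orbits_in = "\<lambda>T. {X \<in> orbits_within f C. X \<subseteq> T}"
  have "inj_on ?orbits_in {T. T \<subseteq> C \<and> f ` T = T}"
    by (rule inj_on_inverseI[where g = Union])
       (simp add: invariant_subset_eq_Union_orbits[OF assms(1), symmetric])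
  moreover have "?orbits_in ` {T. T \<subseteq> C \<and> f ` T = T} \<subseteq> Pow (orbits_within f C)"
    by blast
  ultimately have "card {T. T \<subseteq> C \<and> f ` T = T} \<le> card (Pow (orbits_within f C))"
    using finite_orbits_within[OF assms(2)] by (intro card_inj_on_le) auto
  then show ?thesis
    using finite_orbits_within[OF assms(2)] by (simp add: card_Pow)
qed

lemma card_singleton_orbits_within_le:
  assumes perm: "permutation f" and "finite C"
  shows "card {X \<in> orbits_within f C. \<exists>x. X = {x}} \<le> card {x \<in> C. f x = x}"
proof -
  let ?Fix = "{x \<in> C. f x = x}"
  have "{X \<in> orbits_within f C. \<exists>x. X = {x}} \<subseteq> (\<lambda>x. {x}) ` ?Fix"
  proof
    fix X assume "X \<in> {X \<in> orbits_within f C. \<exists>x. X = {x}}"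
    then obtain x y where X: "X = {x}" "X = orbit f y" "y \<in> C"
      unfolding orbits_within_def by blast
    then have "y = x"
      using permutation_self_in_orbit[OF perm, of y] by blast
    then have "x \<in> ?Fix"
      using X orbit_eq_singleton_iff[of f x] by simp
    then show "X \<in> (\<lambda>x. {x}) ` ?Fix"
      using X(1) by blast
  qed
  then have "card {X \<in> orbits_within f C. \<exists>x. X = {x}} \<le> card ((\<lambda>x. {x}) ` ?Fix)"
    using \<open>finite C\<close> by (intro card_mono) auto
  also have "\<dots> \<le> card ?Fix"
    by (rule card_image_le) (simp add: \<open>finite C\<close>)
  finally show ?thesis .
qed

(* The orbits inside C with at least two elements are pairwise disjoint and consist of
   non-fixed points, so twice their number is at most |C| minus the number of fixed points. *)
lemma card_nontrivial_orbits_within_le: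
  assumes perm: "permutation f" and "finite C"
  defines "O2 \<equiv> {X \<in> orbits_within f C. \<nexists>x. X = {x}}"
  shows "2 * card O2 + card {x \<in> C. f x = x} \<le> card C"
proof -
  let ?Fix = "{x \<in> C. f x = x}"
  have disjoint: "pairwise disjnt O2"
  proof (rule pairwiseI)
    fix X Y assume "X \<in> O2" "Y \<in> O2" "X \<noteq> Y"
    then obtain x y where "X = orbit f x" "Y = orbit f y"
      unfolding O2_def orbits_within_def by blast
    then show "disjnt X Y"
      using \<open>X \<noteq> Y\<close> orbit_eq_of_mem[OF perm] unfolding disjnt_def by blast
  qed
  have Union_O2: "\<Union>O2 \<subseteq> C - ?Fix"
  proof
    fix z assume "z \<in> \<Union>O2"
    then obtain y where y: "orbit f y \<in> O2" "z \<in> orbit f y" "orbit f y \<subseteq> C"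
      unfolding O2_def orbits_within_def by blast
    have "f z \<noteq> z"
      using y(1) orbit_eq_of_mem[OF perm y(2)] orbit_eq_singleton_iff[of f z]
      unfolding O2_def by auto
    then show "z \<in> C - ?Fix"
      using y by auto
  qed
  have card_ge2: "2 \<le> card X" if X: "X \<in> O2" for X
  proof -
    obtain y where "X = orbit f y" "X \<subseteq> C"
      using X unfolding O2_def orbits_within_def by blast
    then have "finite X" "X \<noteq> {}"
      using \<open>finite C\<close> orbit_nonempty finite_subset by metis+
    moreover have "\<nexists>x. X = {x}"
      using X unfolding O2_def by blast
    ultimately have "card X \<noteq> 0" "card X \<noteq> 1"
      by (auto simp: card_1_singleton_iff)
    then show ?thesis
      by linarith
  qed
  have "2 * card O2 = (\<Sum>X\<in>O2. 2)"
    by simp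
  also have "\<dots> \<le> (\<Sum>X\<in>O2. card X)"
    by (rule sum_mono) (rule card_ge2)
  also have "\<dots> = card (\<Union>O2)"
    using disjoint \<open>finite C\<close> Union_O2
    by (intro card_Union_disjoint[symmetric]) (auto intro: finite_subset)
  also have "\<dots> \<le> card (C - ?Fix)"
    using \<open>finite C\<close> Union_O2 by (intro card_mono) auto
  also have "\<dots> = card C - card ?Fix"
    using \<open>finite C\<close> by (intro card_Diff_subset) auto
  finally show ?thesis
    using card_mono[OF \<open>finite C\<close>, of ?Fix] by auto
qed

lemma card_orbits_within_le:
  assumes "permutation f" "finite C"
  shows "2 * card (orbits_within f C) \<le> card C + card {x \<in> C. f x = x}"
proof -
  let ?O1 = "{X \<in> orbits_within f C. \<exists>x. X = {x}}"
  let ?O2 = "{X \<in> orbits_within f C. \<nexists>x. X = {x}}"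
  have "orbits_within f C = ?O1 \<union> ?O2"
    by blast
  then have "card (orbits_within f C) = card (?O1 \<union> ?O2)"
    by (rule arg_cong)
  also have "\<dots> \<le> card ?O1 + card ?O2"
    by (rule card_Un_le)
  finally show ?thesis
    using card_singleton_orbits_within_le[OF assms] card_nontrivial_orbits_within_le[OF assms]
    by linarith
qed

lemma card_invariant_subsets_powr_le:
  assumes "permutation f" "finite C" "card {x \<in> C. f x = x} \<le> m"
  shows "real (card {T. T \<subseteq> C \<and> f ` T = T}) \<le> 2 powr ((real (card C) + real m) / 2)"
proof -
  have "2 * card (orbits_within f C) \<le> card C + m"
    using card_orbits_within_le[OF assms(1,2)] assms(3) by linarith
  then have "2 * real (card (orbits_within f C)) \<le> real (card C) + real m"
    by linarith
  then have orbits: "real (card (orbits_within f C)) \<le> (real (card C) + real m) / 2"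
    by simp
  have "real (card {T. T \<subseteq> C \<and> f ` T = T}) \<le> 2 ^ card (orbits_within f C)"
    using card_invariant_subsets_le[OF assms(1,2)] by (metis of_nat_le_iff of_nat_numeral of_nat_power)
  also have "\<dots> = 2 powr real (card (orbits_within f C))"
    by (simp add: powr_realpow)
  also have "\<dots> \<le> 2 powr ((real (card C) + real m) / 2)"
    using orbits by (rule powr_mono) simp
  finally show ?thesis .
qed

lemma exists_subset_moved_by_all:
  fixes F :: "('a \<Rightarrow> 'a) set"
  assumes "finite F" "finite C"
    and perm: "\<And>\<pi>. \<pi> \<in> F \<Longrightarrow> permutation \<pi>"
    and fixed: "\<And>\<pi>. \<pi> \<in> F \<Longrightarrow> card {x \<in> C. \<pi> x = x} \<le> m"
    and small: "real (card F) * 2 powr ((real (card C) + real m) / 2) < 2 ^ card C"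
  shows "\<exists>T \<subseteq> C. \<forall>\<pi> \<in> F. \<pi> ` T \<noteq> T"
proof -
  define Bad where "Bad = (\<Union>\<pi>\<in>F. {T. T \<subseteq> C \<and> \<pi> ` T = T})"
  have "card Bad \<le> (\<Sum>\<pi>\<in>F. card {T. T \<subseteq> C \<and> \<pi> ` T = T})"
    unfolding Bad_def using \<open>finite F\<close> by (rule card_UN_le)
  then have "real (card Bad) \<le> (\<Sum>\<pi>\<in>F. real (card {T. T \<subseteq> C \<and> \<pi> ` T = T}))"
    by (simp only: of_nat_le_iff flip: of_nat_sum)
  also have "\<dots> \<le> real (card F) * 2 powr ((real (card C) + real m) / 2)"
    using sum_bounded_above[of F _ "2 powr ((real (card C) + real m) / 2)"]
      card_invariant_subsets_powr_le[OF perm \<open>finite C\<close> fixed] by auto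
  also have "\<dots> < real (card (Pow C))"
    using small \<open>finite C\<close> by (simp add: card_Pow)
  finally have card_Bad: "card Bad < card (Pow C)"
    by (simp only: of_nat_less_iff)
  have "finite Bad"
    unfolding Bad_def using \<open>finite F\<close> \<open>finite C\<close> by auto
  then obtain T where "T \<subseteq> C" "T \<notin> Bad"
    using card_Bad card_mono[of Bad "Pow C"] by auto
  then show ?thesis
    unfolding Bad_def by auto
qed

lemma exponential_beats_linear:
  fixes c m N :: real
  assumes "N > 0" "m + 2 * log 2 N < c"
  shows "N * 2 powr ((c + m) / 2) < 2 powr c"
proof -
  have "N = 2 powr log 2 N"
    using assms(1) by simp
  also have "\<dots> < 2 powr ((c - m) / 2)"
    using assms(2) by (intro powr_less_mono) auto
  finally have "N * 2 powr ((c + m) / 2) < 2 powr ((c - m) / 2) * 2 powr ((c + m) / 2)"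
    by (intro mult_strict_right_mono) auto
  also have "\<dots> = 2 powr c"
    by (simp add: powr_add[symmetric] add_divide_distrib[symmetric])
  finally show ?thesis .
qed

lemma transl_inv_group_permutation:
  fixes \<pi> :: "'a::{ab_group_add,finite} \<Rightarrow> 'a"
  assumes "\<pi> \<in> transl_inv_group"
  shows "permutation \<pi>"
proof -
  have "inj \<pi>"
    using assms unfolding transl_inv_group_def by (auto simp: inj_def)
  then show ?thesis
    by (simp add: permutation finite_UNIV_inj_surj bij_def)
qed

(* The fixed points of x \<mapsto> -x + g are the solutions of 2x = g, a coset of the
   subgroup of elements of order at most 2 (or empty). *)
lemma card_fixpoints_reflection:
  fixes g :: "'a::{ab_group_add,finite}"
  shows "card {x \<in> C. - x + g = x} \<le> card {x::'a. x + x = 0}"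
proof (cases "\<exists>x0. x0 + x0 = g")
  case False
  then have "{x \<in> C. - x + g = x} = {}"
    by (auto simp: algebra_simps)
  then show ?thesis
    by (metis card.empty le0)
next
  case True
  then obtain x0 where x0: "x0 + x0 = g" by blast
  have "inj_on (\<lambda>x. x - x0) {x \<in> C. - x + g = x}"
    by (auto simp: inj_on_def)
  moreover have "(\<lambda>x. x - x0) ` {x \<in> C. - x + g = x} \<subseteq> {x. x + x = 0}"
    using x0 by (auto simp: algebra_simps)
  ultimately show ?thesis
    by (intro card_inj_on_le) auto
qed

(* Every non-identity element of A \<rtimes> <i> fixes at most m points, where m is the
   number of elements of order at most 2: non-trivial translations fix none. *)
lemma card_fixpoints_transl_inv_group:
  fixes \<pi> :: "'a::{ab_group_add,finite} \<Rightarrow> 'a"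
  assumes "\<pi> \<in> transl_inv_group" "\<pi> \<noteq> id"
  shows "card {x \<in> C. \<pi> x = x} \<le> card {x::'a. x + x = 0}"
proof -
  obtain g where "\<pi> = (\<lambda>x. x + g) \<or> \<pi> = (\<lambda>x. - x + g)"
    using assms(1) unfolding transl_inv_group_def by blast
  then show ?thesis
  proof
    assume translation: "\<pi> = (\<lambda>x. x + g)"
    then have "g \<noteq> 0"
      using assms(2) by (auto simp: fun_eq_iff)
    then have "{x \<in> C. \<pi> x = x} = {}"
      using translation by auto
    then show ?thesis
      by (metis card.empty le0)
  next
    assume "\<pi> = (\<lambda>x. - x + g)"
    then show ?thesis
      using card_fixpoints_reflection[of C g] by simp
  qed
qed

lemma card_transl_inv_group:
  "card (transl_inv_group :: ('a::{ab_group_add,finite} \<Rightarrow> 'a) set) \<le> 2 * card (UNIV :: 'a set)"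
proof -
  have split: "(transl_inv_group :: ('a \<Rightarrow> 'a) set) = range (\<lambda>g x. x + g) \<union> range (\<lambda>g x. - x + g)"
    unfolding transl_inv_group_def by blast
  have "card (transl_inv_group :: ('a \<Rightarrow> 'a) set)
      \<le> card (range (\<lambda>(g::'a) x. x + g)) + card (range (\<lambda>(g::'a) x. - x + g))"
    unfolding split by (rule card_Un_le)
  also have "\<dots> \<le> 2 * card (UNIV :: 'a set)"
    using card_image_le[of "UNIV :: 'a set" "\<lambda>g x. x + g"]
      card_image_le[of "UNIV :: 'a set" "\<lambda>g x. - x + g"] by simp
  finally show ?thesis .
qed

(* Since 0 \<notin> S the graph is loopless, so the injective colouring is proper and the
   chromatic number is attained by some proper colouring. *)
lemma chromatic_number_attained:
  fixes S :: "'a::{ab_group_add,finite} set"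
  assumes "0 \<notin> S"
  shows "\<exists>c. proper_colouring S (chromatic_number S) c"
proof -
  obtain h where h: "bij_betw h (UNIV :: 'a set) {..<card (UNIV :: 'a set)}"
    using ex_bij_betw_finite_nat[of "UNIV :: 'a set"] atLeast0LessThan by auto
  have "proper_colouring S (card (UNIV :: 'a set)) h"
    unfolding proper_colouring_def cay_adj_def
  proof (intro conjI allI impI)
    show "h x < card (UNIV :: 'a set)" for x
      using bij_betwE[OF h] by blast
    show "h x \<noteq> h y" if "y - x \<in> S" for x y
      using that assms bij_betw_imp_inj_on[OF h] by (metis UNIV_I diff_self inj_onD)
  qed
  then have "\<exists>k c. proper_colouring S k c"
    by blast
  then show ?thesis
    unfolding chromatic_number_def by (rule LeastI_ex)
qed

lemma large_colour_class:
  fixes c :: "'a::finite \<Rightarrow> nat" and D :: real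
  assumes "\<forall>x. c x < k" "real k * D < real (card (UNIV :: 'a set))"
  shows "\<exists>j. D < real (card (c -` {j}))"
proof (rule ccontr)
  assume "\<not> ?thesis"
  then have small: "real (card (c -` {j})) \<le> D" for j
    by (simp add: not_less)
  have "UNIV = (\<Union>j\<in>{..<k}. c -` {j})"
    using assms(1) by auto
  then have "card (UNIV :: 'a set) \<le> (\<Sum>j\<in>{..<k}. card (c -` {j}))"
    by (metis card_UN_le finite_lessThan)
  then have "real (card (UNIV :: 'a set)) \<le> (\<Sum>j\<in>{..<k}. real (card (c -` {j})))"
    by (simp only: of_nat_le_iff flip: of_nat_sum)
  also have "\<dots> \<le> real k * D"
    using sum_bounded_above[of "{..<k}" _ D] small by simp
  finally show False
    using assms(2) by simp
qed

(* Recolouring a subset T of a colour class with a fresh colour k keeps the colouring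
   proper, and T becomes a colour class; if no non-identity automorphism fixes T setwise,
   the new colouring with k + 1 colours is distinguishing. *)
lemma dist_chromatic_number_le_Suc:
  assumes proper: "proper_colouring S k c"
    and T: "T \<subseteq> c -` {j}"
    and moved: "\<And>\<pi>. \<pi> \<in> cay_aut S \<Longrightarrow> \<pi> \<noteq> id \<Longrightarrow> \<pi> ` T \<noteq> T"
  shows "dist_chromatic_number S \<le> k + 1"
proof -
  define c' where "c' x = (if x \<in> T then k else c x)" for x
  have "proper_colouring S (k + 1) c'"
    unfolding proper_colouring_def
  proof (intro conjI allI impI)
    show "c' x < k + 1" for x
      using proper unfolding c'_def proper_colouring_def by (simp add: less_SucI)
    show "c' x \<noteq> c' y" if "cay_adj S x y" for x y
    proof -
      have "c x \<noteq> c y" "c x < k" "c y < k"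
        using that proper unfolding proper_colouring_def by auto
      moreover have "x \<notin> T \<or> y \<notin> T"
        using T \<open>c x \<noteq> c y\<close> by auto
      ultimately show ?thesis
        unfolding c'_def by auto
    qed
  qed
  moreover have "c' -` {k} = T"
    using proper unfolding c'_def proper_colouring_def by (auto split: if_splits)
  ultimately have "distinguishing_colouring S (k + 1) c'"
    unfolding distinguishing_colouring_def using moved by force
  then show ?thesis
    unfolding dist_chromatic_number_def by (blast intro: Least_le)
qed

lemma transl_inv_group_asymmetric_subset:
  fixes C :: "'a::{ab_group_add,finite} set"
  defines "n \<equiv> card (UNIV :: 'a set)" and "m \<equiv> card {x::'a. x + x = 0}"
  assumes large: "real m + 2 * log 2 (2 * real n) < real (card C)"
  shows "\<exists>T \<subseteq> C. \<forall>\<pi> \<in> transl_inv_group - {id}. \<pi> ` T \<noteq> T"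
proof (rule exists_subset_moved_by_all)
  show "permutation \<pi>" "card {x \<in> C. \<pi> x = x} \<le> m" if "\<pi> \<in> transl_inv_group - {id}" for \<pi>
    using that transl_inv_group_permutation card_fixpoints_transl_inv_group
    unfolding m_def by auto
  have "card (transl_inv_group - {id} :: ('a \<Rightarrow> 'a) set) \<le> 2 * n"
    using card_transl_inv_group[where 'a = 'a] card_Diff1_le[of "transl_inv_group :: ('a \<Rightarrow> 'a) set" id]
    unfolding n_def by linarith
  then have "real (card (transl_inv_group - {id} :: ('a \<Rightarrow> 'a) set)) * 2 powr ((real (card C) + real m) / 2)
      \<le> (2 * real n) * 2 powr ((real (card C) + real m) / 2)"
    by (intro mult_right_mono) simp_all
  also have "\<dots> < 2 ^ card C"
    using exponential_beats_linear[OF _ large] unfolding n_def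
    by (simp add: finite_UNIV_card_ge_0 powr_realpow)
  finally show "real (card (transl_inv_group - {id} :: ('a \<Rightarrow> 'a) set)) * 2 powr ((real (card C) + real m) / 2)
      < 2 ^ card C" .
qed simp_all

theorem mainTheorem8:
  fixes S :: "'a::{ab_group_add,finite} set"
  assumes "Z2r_times_noncyclic_odd TYPE('a)"
    and "0 \<notin> S" and "\<forall>s\<in>S. - s \<in> S"
    and "cay_aut S = transl_inv_group"
    and "real (chromatic_number S) <
           real (card (UNIV::'a set)) / (real (card {x::'a. x + x = 0}) + 2 * log 2 (2 * real (card (UNIV::'a set))))"
  shows "dist_chromatic_number S \<le> chromatic_number S + 1"
proof -
  define D where "D = real (card {x::'a. x + x = 0}) + 2 * log 2 (2 * real (card (UNIV :: 'a set)))"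
  obtain c where c: "proper_colouring S (chromatic_number S) c"
    using chromatic_number_attained[OF assms(2)] by blast
  have "0 < card (UNIV :: 'a set)"
    by (simp add: finite_UNIV_card_ge_0)
  then have "0 < log 2 (2 * real (card (UNIV :: 'a set)))"
    by simp
  then have "0 < D"
    unfolding D_def by (simp add: add_nonneg_pos)
  then have "real (chromatic_number S) * D < real (card (UNIV :: 'a set))"
    using assms(5) unfolding D_def by (simp add: pos_less_divide_eq)
  then obtain j where "D < real (card (c -` {j}))"
    using large_colour_class c unfolding proper_colouring_def by blast
  then obtain T where T: "T \<subseteq> c -` {j}" "\<forall>\<pi> \<in> transl_inv_group - {id}. \<pi> ` T \<noteq> T"
    using transl_inv_group_asymmetric_subset[of "c -` {j}"] unfolding D_def by blast
  show ?thesis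
  proof (rule dist_chromatic_number_le_Suc[OF c T(1)])
    show "\<pi> ` T \<noteq> T" if "\<pi> \<in> cay_aut S" "\<pi> \<noteq> id" for \<pi>
      using that T(2) assms(4) by blast
  qed
qed

end
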